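(* Assume the Nested Logit model with outside option described in the context satisfies Assumptions 1 and 2, and suppose the true choice probabilities $\phi(i,S)$ are known for all $S \in \mathcal{S} \cup \{[n]\}$ and all $i \in S \cup \{0\}$ (so all boost factors $\mathsf{BF}(i,S)$, $S\in\mathcal S$, $i\in S\cup\{0\}$, are known exactly). Then the matrix $E$ returned by Algorithm 1 (described in the context) satisfies $E[i,j] = \mathbf{1}(N(i) = N(j))$ for all $i \neq j$ in $[n]$.
   Context: Items: $[n]=\{1,\dots,n\}$ with $n\ge 2$. Experiment design: fix an integer base $b \ge 2$, let $L = \lceil \log_b n \rceil$, and fix an injective map $\sigma: [n] \to \{0,\dots,b-1\}^L$, writing $\sigma_\ell(i)$ for its $\ell$-th coordinate. For $\ell \in \{1,\dots,L\}$ and $d \in \{0,\dots,b-1\}$ let $S_{\ell,-d} = \{i \in [n] : \sigma_\ell(i) \neq d\}$, and let $\mathcal{S} = \{S_{\ell,-d}\}_{\ell,d}$; the control assortment $[n]$ is also offered. Nested Logit model with outside option: $\mathcal{N}$ is a partition of $[n]$ into nonempty disjoint nests; $N(i)$ denotes the nest containing $i$. Each item has a weight $v_i > 0$, each nest $N$ a parameter $\lambda_N \in [0,1]$, and each nest with $\lambda_N = 0$ an additional weight $v_N > 0$. For $S \subseteq [n]$ set $v_N(S) = (\sum_{i \in N \cap S} v_i)^{\lambda_N}$ if $\lambda_N \in (0,1]$ and $v_N(S) = v_N \mathbf{1}(N \cap S \neq \emptyset)$ if $\lambda_N = 0$. For $i \in S$, $\phi(i,S) = \frac{v_{N(i)}(S)}{1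 + \sum_{N \in \mathcal{N}} v_N(S)} \cdot \frac{v_i}{\sum_{j \in N(i) \cap S} v_j}$, and $\phi(0,S) = \frac{1}{1 + \sum_{N \in \mathcal{N}} v_N(S)}$. Boost factor: $\mathsf{BF}(i,S) = \phi(i,S)/\phi(i,[n])$ for $S \in \mathcal{S}$, $i \in S \cup \{0\}$. Multiplier: $\mathsf{Mult}(N,S) = \left(\frac{\sum_{j \in N} v_j}{\sum_{j \in N \cap S} v_j}\right)^{1-\lambda_N}$. Assumption 1: $\lambda_N = 1$ iff $|N| = 1$. Assumption 2: for every $S \in \mathcal{S}$ and distinct nests $N \neq N'$ with $\emptyset \neq N \cap S \neq N$ and $\emptyset \neq N' \cap S \neq N'$, $\mathsf{Mult}(N,S) \neq \mathsf{Mult}(N',S)$. Algorithm 1 maintains a symmetric matrix $E$ with entries $E[i,j] \in \{0,1,\text{null}\}$ for $i \neq j$ (every assignment to $E[i,j]$ is also made to $E[j,i]$), initially all null. (1) For each $S \in \mathcal{S}$ (in any order): for each pair of distinct $i,j \in S$, if $\mathsf{BF}(i,S) \neq \mathsf{BF}(j,S)$ set $E[i,j] \gets 0$; else if $\mathsf{BF}(i,S) = \mathsf{BF}(j,S) > \mathsf{BF}(0,S)$ set $E[i,j] \gets 1$. Then, with $\mathrm{NoBoost} = \{i \in S : \mathsf{BF}(i,S) = \mathsf{BF}(0,S)\}$, set $E[i,k] \gets 0$ for all $i \in \mathrm{NoBoost}$ and all $k \notin S$. (2) One-hop transitivity: compute the set of pairs $(i,j)$ with $E[i,j] = \text{null}$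 for which some $k \notin \{i,j\}$ has $E[i,k] = E[j,k] = 1$, and set $E[i,j] \gets 1$ for all such pairs. (3) Identify missing pairs: compute the set of pairs $(i,j)$ with $E[i,j] = \text{null}$ such that $E[i,k] \neq 1$ and $E[j,k] \neq 1$ for all $k \notin \{i,j\}$, and set $E[i,j] \gets 1$ for all such pairs. (4) Set every remaining null entry to $0$ and return $E$. *)

theory Defs
  imports Complex_Main "HOL-Library.Disjoint_Sets"
begin

text \<open>Items are 1..n (type nat); the index 0 denotes the outside option.\<close>

definition Lnum :: "nat \<Rightarrow> nat \<Rightarrow> nat" where
  "Lnum b n = nat \<lceil>log (real b) (real n)\<rceil>"

text \<open>sigma i l is the l-th coordinate (l in 1..L) of the code of item i.\<close>
definition valid_encoding :: "nat \<Rightarrow> nat \<Rightarrow> (nat \<Rightarrow> nat \<Rightarrow> nat) \<Rightarrow> bool" where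
  "valid_encoding n b \<sigma> \<longleftrightarrow>
     (\<forall>i\<in>{1..n}. \<forall>l\<in>{1..Lnum b n}. \<sigma> i l < b) \<and>
     (\<forall>i\<in>{1..n}. \<forall>j\<in>{1..n}. (\<forall>l\<in>{1..Lnum b n}. \<sigma> i l = \<sigma> j l) \<longrightarrow> i = j)"

definition exp_set :: "nat \<Rightarrow> (nat \<Rightarrow> nat \<Rightarrow> nat) \<Rightarrow> nat \<Rightarrow> nat \<Rightarrow> nat set" where
  "exp_set n \<sigma> l d = {i \<in> {1..n}. \<sigma> i l \<noteq> d}"

definition design :: "nat \<Rightarrow> nat \<Rightarrow> (nat \<Rightarrow> nat \<Rightarrow> nat) \<Rightarrow> nat set set" where
  "design n b \<sigma> = {exp_set n \<sigma> l d | l d. l \<in> {1..Lnum b n} \<and> d < b}"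

definition nest_of :: "nat set set \<Rightarrow> nat \<Rightarrow> nat set" where
  "nest_of P i = (THE N. N \<in> P \<and> i \<in> N)"

definition nest_weight ::
  "(nat \<Rightarrow> real) \<Rightarrow> (nat set \<Rightarrow> real) \<Rightarrow> (nat set \<Rightarrow> real) \<Rightarrow> nat set \<Rightarrow> nat set \<Rightarrow> real" where
  "nest_weight v lam vN N S =
     (if lam N = 0 then (if N \<inter> S \<noteq> {} then vN N else 0)
      else (\<Sum>j\<in>N \<inter> S. v j) powr lam N)"

definition choice_prob ::
  "nat set set \<Rightarrow> (nat \<Rightarrow> real) \<Rightarrow> (nat set \<Rightarrow> real) \<Rightarrow> (nat set \<Rightarrow> real) \<Rightarrow> nat \<Rightarrow> nat set \<Rightarrow> real" where
  "choice_prob P v lam vN i S =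
     (if i = 0 then 1 / (1 + (\<Sum>N\<in>P. nest_weight v lam vN N S))
      else nest_weight v lam vN (nest_of P i) S / (1 + (\<Sum>N\<in>P. nest_weight v lam vN N S))
           * (v i / (\<Sum>j\<in>nest_of P i \<inter> S. v j)))"

definition boost_factor ::
  "nat set set \<Rightarrow> (nat \<Rightarrow> real) \<Rightarrow> (nat set \<Rightarrow> real) \<Rightarrow> (nat set \<Rightarrow> real) \<Rightarrow> nat \<Rightarrow> nat \<Rightarrow> nat set \<Rightarrow> real" where
  "boost_factor P v lam vN n i S = choice_prob P v lam vN i S / choice_prob P v lam vN i {1..n}"

definition mult :: "(nat \<Rightarrow> real) \<Rightarrow> (nat set \<Rightarrow> real) \<Rightarrow> nat set \<Rightarrow> nat set \<Rightarrow> real" where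
  "mult v lam N S = ((\<Sum>j\<in>N. v j) / (\<Sum>j\<in>N \<inter> S. v j)) powr (1 - lam N)"

definition NL_model ::
  "nat \<Rightarrow> nat set set \<Rightarrow> (nat \<Rightarrow> real) \<Rightarrow> (nat set \<Rightarrow> real) \<Rightarrow> (nat set \<Rightarrow> real) \<Rightarrow> bool" where
  "NL_model n P v lam vN \<longleftrightarrow>
     partition_on {1..n} P \<and>
     (\<forall>i\<in>{1..n}. 0 < v i) \<and>
     (\<forall>N\<in>P. 0 \<le> lam N \<and> lam N \<le> 1) \<and>
     (\<forall>N\<in>P. lam N = 0 \<longrightarrow> 0 < vN N)"

definition assumption1 :: "nat set set \<Rightarrow> (nat set \<Rightarrow> real) \<Rightarrow> bool" where
  "assumption1 P lam \<longleftrightarrow> (\<forall>N\<in>P. lam N = 1 \<longleftrightarrow> card N = 1)"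

definition assumption2 ::
  "nat set set \<Rightarrow> nat set set \<Rightarrow> (nat \<Rightarrow> real) \<Rightarrow> (nat set \<Rightarrow> real) \<Rightarrow> bool" where
  "assumption2 SS P v lam \<longleftrightarrow>
     (\<forall>S\<in>SS. \<forall>N\<in>P. \<forall>N'\<in>P.
        N \<noteq> N' \<and> N \<inter> S \<noteq> {} \<and> N \<inter> S \<noteq> N \<and> N' \<inter> S \<noteq> {} \<and> N' \<inter> S \<noteq> N'
        \<longrightarrow> mult v lam N S \<noteq> mult v lam N' S)"

text \<open>Matrix entries: None = null, Some 0, Some 1. BF i S is the boost factor, BF 0 S that
  of the outside option.\<close>
type_synonym emat = "nat \<Rightarrow> nat \<Rightarrow> nat option"

definition step1_update :: "nat \<Rightarrow> (nat \<Rightarrow> nat set \<Rightarrow> real) \<Rightarrow> nat set \<Rightarrow> emat \<Rightarrow> emat" where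
  "step1_update n BF S E = (\<lambda>i j.
     if i \<in> S \<and> j \<in> S \<and> i \<noteq> j then
       (if BF i S \<noteq> BF j S then Some 0
        else if BF i S > BF 0 S then Some 1
        else E i j)
     else if i \<noteq> j \<and> i \<in> {1..n} \<and> j \<in> {1..n} \<and>
             ((i \<in> S \<and> BF i S = BF 0 S \<and> j \<notin> S) \<or> (j \<in> S \<and> BF j S = BF 0 S \<and> i \<notin> S))
       then Some 0
     else E i j)"

definition step2 :: "nat \<Rightarrow> emat \<Rightarrow> emat" where
  "step2 n E = (\<lambda>i j.
     if E i j = None \<and> i \<noteq> j \<and> i \<in> {1..n} \<and> j \<in> {1..n} \<and>
        (\<exists>k\<in>{1..n}. k \<noteq> i \<and> k \<noteq> j \<and> E i k = Some 1 \<and> E j k = Some 1)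
     then Some 1 else E i j)"

definition step3 :: "nat \<Rightarrow> emat \<Rightarrow> emat" where
  "step3 n E = (\<lambda>i j.
     if E i j = None \<and> i \<noteq> j \<and> i \<in> {1..n} \<and> j \<in> {1..n} \<and>
        (\<forall>k\<in>{1..n}. k \<noteq> i \<and> k \<noteq> j \<longrightarrow> E i k \<noteq> Some 1 \<and> E j k \<noteq> Some 1)
     then Some 1 else E i j)"

definition step4 :: "emat \<Rightarrow> nat \<Rightarrow> nat \<Rightarrow> nat" where
  "step4 E = (\<lambda>i j. case E i j of None \<Rightarrow> 0 | Some x \<Rightarrow> x)"

text \<open>ord is the (arbitrary) order in which the assortments of the design are processed.\<close>
definition algorithm1 :: "nat \<Rightarrow> (nat \<Rightarrow> nat set \<Rightarrow> real) \<Rightarrow> nat set list \<Rightarrow> nat \<Rightarrow> nat \<Rightarrow> nat" where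
  "algorithm1 n BF ord =
     step4 (step3 n (step2 n (foldl (\<lambda>E S. step1_update n BF S E) (\<lambda>_ _. None) ord)))"

end

theory Submission
  imports Defs
begin

(* The Nested Logit formulas give BF(i,S) = BF(0,S) * Mult(N(i),S), and by Assumption 1 the
   multiplier is 1 if N(i) \<subseteq> S and exceeds 1 otherwise. Hence every entry written in step 1 is
   correct: different boosts separate nests, equal boosts above BF(0,S) identify the nest by
   Assumption 2, and an unboosted i \<in> S has its whole nest inside S. The later steps only fill
   null entries, step 2 correctly. If step 1 leaves (x,y) null, every z \<in> N(x) agrees with x or y in
   every coordinate, since otherwise S_{l,-\<sigma>_l(z)} boosts x with y present. With the injectivity of
   \<sigma> this shows that a null pair inside a nest is linked to every third member of the nest (so step 2
   or, for a two-element nest, step 3 sets it to 1), while for a null pair (i,j) across nests some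
   other member of N(i) is linked to i, so step 3 leaves it null and step 4 sets it to 0. *)

section \<open>Nests\<close>

lemma nest_of_eqI:
  assumes "partition_on A P" "N \<in> P" "i \<in> N"
  shows "nest_of P i = N"
  unfolding nest_of_def
proof (rule the_equality)
  show "N \<in> P \<and> i \<in> N" using assms(2,3) ..
  show "M = N" if "M \<in> P \<and> i \<in> M" for M
    using that assms disjointD[OF partition_onD2[OF assms(1)]] by blast
qed

lemma nest_of_in_partition:
  assumes "partition_on A P" "i \<in> A"
  shows "nest_of P i \<in> P"
  using assms nest_of_eqI partition_onD1 by fastforce

lemma in_nest_of:
  assumes "partition_on A P" "i \<in> A"
  shows "i \<in> nest_of P i"
  using assms nest_of_eqI partition_onD1 by fastforce

lemma nest_of_subset:
  assumes "partition_on A P" "i \<in> A"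
  shows "nest_of P i \<subseteq> A"
  using assms nest_of_in_partition partition_onD1 by fastforce

lemma nest_of_eq_iff:
  assumes "partition_on A P" "i \<in> A" "j \<in> A"
  shows "nest_of P i = nest_of P j \<longleftrightarrow> j \<in> nest_of P i"
  using in_nest_of[OF assms(1,3)] nest_of_eqI[OF assms(1) nest_of_in_partition[OF assms(1,2)]]
  by auto

section \<open>Boost factors\<close>

lemma mult_eq_1:
  assumes "(\<Sum>j\<in>N. v j) \<noteq> 0" "N \<subseteq> S"
  shows "mult v lam N S = 1"
  using assms by (simp add: mult_def Int_absorb2)

lemma one_less_mult:
  assumes "finite N" "\<forall>x\<in>N. 0 < v x" "N \<inter> S \<noteq> {}" "\<not> N \<subseteq> S" "lam N < 1"
  shows "1 < mult v lam N S"
proof -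
  obtain z where z: "z \<in> N" "z \<notin> S" using assms(4) by blast
  have "0 < (\<Sum>j\<in>N \<inter> S. v j)"
    using assms(1-3) by (intro sum_pos) auto
  moreover have "(\<Sum>j\<in>N \<inter> S. v j) < (\<Sum>j\<in>N. v j)"
    using assms(1,2) z by (intro sum_strict_mono2[of _ _ z]) auto
  ultimately show ?thesis
    unfolding mult_def using assms(5) by (intro gr_one_powr) auto
qed

lemma nest_weight_ratio_eq_mult:
  fixes v :: "nat \<Rightarrow> real"
  assumes "N \<subseteq> T" "N \<inter> S \<noteq> {}" "0 < (\<Sum>j\<in>N \<inter> S. v j)" "0 < (\<Sum>j\<in>N. v j)"
    and "lam N = 0 \<Longrightarrow> vN N \<noteq> 0"
  shows "nest_weight v lam vN N S / nest_weight v lam vN N T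
           * ((\<Sum>j\<in>N. v j) / (\<Sum>j\<in>N \<inter> S. v j)) = mult v lam N S"
proof (cases "lam N = 0")
  case True
  with assms show ?thesis by (auto simp: nest_weight_def mult_def)
next
  case False
  with assms show ?thesis
    by (simp add: nest_weight_def mult_def Int_absorb2 powr_diff powr_divide mult_ac)
qed

locale nested_logit =
  fixes n :: nat and P :: "nat set set" and v :: "nat \<Rightarrow> real" and lam vN :: "nat set \<Rightarrow> real"
  assumes model: "NL_model n P v lam vN"
begin

abbreviation BF :: "nat \<Rightarrow> nat set \<Rightarrow> real" where
  "BF \<equiv> boost_factor P v lam vN n"

lemma partition: "partition_on {1..n} P"
  using model by (simp add: NL_model_def)

lemma weight_pos: "i \<in> {1..n} \<Longrightarrow> 0 < v i"
  using model by (simp add: NL_model_def)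

lemma nest_weights_pos:
  assumes "i \<in> {1..n}"
  shows "\<forall>x\<in>nest_of P i. 0 < v x"
  using nest_of_subset[OF partition assms] weight_pos by blast

lemma finite_nest_of: "i \<in> {1..n} \<Longrightarrow> finite (nest_of P i)"
  using nest_of_subset[OF partition] finite_subset by blast

lemma nest_sum_pos:
  assumes "i \<in> {1..n}" "i \<in> S"
  shows "0 < (\<Sum>j\<in>nest_of P i \<inter> S. v j)"
  using assms finite_nest_of[OF assms(1)] nest_weights_pos[OF assms(1)] in_nest_of[OF partition]
  by (intro sum_pos2[of _ i]) auto

definition total_weight :: "nat set \<Rightarrow> real" where
  "total_weight S = 1 + (\<Sum>N\<in>P. nest_weight v lam vN N S)"

lemma total_weight_pos: "0 < total_weight S"
proof -
  have "0 \<le> nest_weight v lam vN N S" if "N \<in> P" for N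
    using model that by (auto simp: NL_model_def nest_weight_def)
  then show ?thesis
    unfolding total_weight_def by (simp add: add_pos_nonneg sum_nonneg)
qed

lemma boost_factor_outside: "BF 0 S = total_weight {1..n} / total_weight S"
  using total_weight_pos[of S] total_weight_pos[of "{1..n}"]
  by (simp add: boost_factor_def choice_prob_def total_weight_def[symmetric])

lemma boost_factor_outside_pos: "0 < BF 0 S"
  using total_weight_pos by (simp add: boost_factor_outside)

lemma boost_factor_eq_mult:
  assumes "S \<subseteq> {1..n}" "i \<in> S"
  shows "BF i S = BF 0 S * mult v lam (nest_of P i) S"
proof -
  define N where "N = nest_of P i"
  define a where "a = (\<Sum>j\<in>N \<inter> S. v j)"
  define c where "c = (\<Sum>j\<in>N. v j)"
  have i: "i \<in> {1..n}" "i \<noteq> 0" using assms by auto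
  have N: "N \<in> P" "N \<subseteq> {1..n}" "i \<in> N"
    using nest_of_in_partition[OF partition i(1)] nest_of_subset[OF partition i(1)]
      in_nest_of[OF partition i(1)] by (simp_all add: N_def)
  have a: "0 < a" and c: "0 < c"
    using nest_sum_pos[OF i(1) assms(2)] nest_sum_pos[OF i(1), of UNIV]
    by (simp_all add: a_def c_def N_def)
  have vN: "lam N = 0 \<Longrightarrow> 0 < vN N"
    using model N(1) by (simp add: NL_model_def)
  have ratio: "nest_weight v lam vN N S / nest_weight v lam vN N {1..n} * (c / a) = mult v lam N S"
    unfolding a_def c_def using N(3) assms(2) a c vN
    by (intro nest_weight_ratio_eq_mult[OF N(2)]) (auto simp: a_def c_def)
  have "0 < nest_weight v lam vN N {1..n}"
    using N vN c by (auto simp: nest_weight_def c_def Int_absorb2)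
  then have "BF i S = total_weight {1..n} / total_weight S
      * (nest_weight v lam vN N S / nest_weight v lam vN N {1..n} * (c / a))"
    using total_weight_pos[of S] total_weight_pos[of "{1..n}"] weight_pos[OF i(1)] a c N(2) i(2)
    by (simp add: boost_factor_def choice_prob_def total_weight_def[symmetric] N_def[symmetric]
        a_def[symmetric] c_def[symmetric] Int_absorb2 field_simps)
  then show ?thesis
    unfolding N_def[symmetric] boost_factor_outside ratio[symmetric] .
qed

lemma one_less_mult_nest_of:
  assumes "assumption1 P lam" "i \<in> {1..n}" "i \<in> S" "\<not> nest_of P i \<subseteq> S"
  shows "1 < mult v lam (nest_of P i) S"
proof (rule one_less_mult)
  define N where "N = nest_of P i"
  have N: "N \<in> P" "i \<in> N"
    using nest_of_in_partition[OF partition assms(2)] in_nest_of[OF partition assms(2)]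
    by (simp_all add: N_def)
  have "card N \<noteq> 1"
    using assms(3,4) N(2) by (auto simp: N_def card_1_singleton_iff)
  then show "lam (nest_of P i) < 1"
    using assms(1) model N(1) by (force simp: assumption1_def NL_model_def N_def)
qed (use assms finite_nest_of nest_weights_pos in_nest_of[OF partition assms(2)] in auto)

lemma boost_factor_nest_subset:
  assumes "S \<subseteq> {1..n}" "i \<in> S" "nest_of P i \<subseteq> S"
  shows "BF i S = BF 0 S"
  using boost_factor_eq_mult[OF assms(1,2)] mult_eq_1[OF _ assms(3)] nest_sum_pos[of i UNIV] assms(1,2)
  by auto

lemma boost_factor_nest_not_subset:
  assumes "assumption1 P lam" "S \<subseteq> {1..n}" "i \<in> S" "\<not> nest_of P i \<subseteq> S"
  shows "BF 0 S < BF i S"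
  using boost_factor_eq_mult[OF assms(2,3)] boost_factor_outside_pos[of S]
    one_less_mult_nest_of[OF assms(1) _ assms(3,4)] assms(2,3)
  by auto

lemma boost_factor_eq_outside_iff:
  assumes "assumption1 P lam" "S \<subseteq> {1..n}" "i \<in> S"
  shows "BF i S = BF 0 S \<longleftrightarrow> nest_of P i \<subseteq> S"
  using boost_factor_nest_subset[OF assms(2,3)] boost_factor_nest_not_subset[OF assms] by force

lemma outside_less_boost_factor_iff:
  assumes "assumption1 P lam" "S \<subseteq> {1..n}" "i \<in> S"
  shows "BF 0 S < BF i S \<longleftrightarrow> \<not> nest_of P i \<subseteq> S"
  using boost_factor_nest_subset[OF assms(2,3)] boost_factor_nest_not_subset[OF assms] by force

lemma same_nest_imp_boost_factor_eq:
  assumes "S \<subseteq> {1..n}" "i \<in> S" "j \<in> S" "nest_of P i = nest_of P j"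
  shows "BF i S = BF j S"
  using boost_factor_eq_mult[OF assms(1,2)] boost_factor_eq_mult[OF assms(1,3)] assms(4) by simp

lemma unboosted_imp_other_nest:
  assumes "assumption1 P lam" "S \<subseteq> {1..n}" "i \<in> S" "BF i S = BF 0 S" "j \<in> {1..n}" "j \<notin> S"
  shows "nest_of P i \<noteq> nest_of P j"
proof -
  have "nest_of P i \<subseteq> S"
    using boost_factor_eq_outside_iff[OF assms(1-3)] assms(4) by simp
  moreover have "i \<in> {1..n}"
    using assms(2,3) by blast
  ultimately show ?thesis
    using nest_of_eq_iff[OF partition _ assms(5)] assms(6) by blast
qed

end

section \<open>Algorithm 1\<close>

lemma mem_exp_set_iff: "x \<in> exp_set n \<sigma> l d \<longleftrightarrow> x \<in> {1..n} \<and> \<sigma> x l \<noteq> d"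
  by (simp add: exp_set_def)

lemma design_subset: "S \<in> design n b \<sigma> \<Longrightarrow> S \<subseteq> {1..n}"
  by (auto simp: design_def exp_set_def)

lemma exp_set_code_in_design:
  assumes "valid_encoding n b \<sigma>" "x \<in> {1..n}" "l \<in> {1..Lnum b n}"
  shows "exp_set n \<sigma> l (\<sigma> x l) \<in> design n b \<sigma>"
proof -
  have "\<sigma> x l < b"
    using assms(1) unfolding valid_encoding_def using assms(2,3) by blast
  then show ?thesis
    unfolding design_def using assms(3) by blast
qed

lemma valid_encoding_inj:
  assumes "valid_encoding n b \<sigma>" "x \<in> {1..n}" "y \<in> {1..n}"
    and "\<And>l. l \<in> {1..Lnum b n} \<Longrightarrow> \<sigma> x l = \<sigma> y l"
  shows "x = y"
proof -
  have "\<forall>i\<in>{1..n}. \<forall>j\<in>{1..n}. (\<forall>l\<in>{1..Lnum b n}. \<sigma> i l = \<sigma> j l) \<longrightarrow> i = j"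
    using assms(1) unfolding valid_encoding_def by (rule conjunct2)
  then show ?thesis
    using assms(2-4) by blast
qed

definition step1_sets :: "nat \<Rightarrow> (nat \<Rightarrow> nat set \<Rightarrow> real) \<Rightarrow> nat set \<Rightarrow> nat \<Rightarrow> nat \<Rightarrow> bool" where
  "step1_sets n BF S i j \<longleftrightarrow> i \<noteq> j \<and>
     (i \<in> S \<and> j \<in> S \<and> (BF i S \<noteq> BF j S \<or> BF 0 S < BF i S) \<or>
      i \<in> {1..n} \<and> j \<in> {1..n} \<and>
      (i \<in> S \<and> BF i S = BF 0 S \<and> j \<notin> S \<or> j \<in> S \<and> BF j S = BF 0 S \<and> i \<notin> S))"

lemma step1_sets_sym: "step1_sets n BF S i j \<longleftrightarrow> step1_sets n BF S j i"
  unfolding step1_sets_def by auto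

lemma step1_update_eq_None_iff:
  "step1_update n BF S E i j = None \<longleftrightarrow> E i j = None \<and> \<not> step1_sets n BF S i j"
  unfolding step1_update_def step1_sets_def by auto

lemma step1_update_unchanged: "\<not> step1_sets n BF S i j \<Longrightarrow> step1_update n BF S E i j = E i j"
  unfolding step1_update_def step1_sets_def by auto

lemma foldl_step1_update_eq_None_iff:
  "foldl (\<lambda>E S. step1_update n BF S E) E0 Ss i j = None \<longleftrightarrow>
     E0 i j = None \<and> (\<forall>S\<in>set Ss. \<not> step1_sets n BF S i j)"
  by (induction Ss arbitrary: E0) (simp_all add: step1_update_eq_None_iff)

lemma step2_unchanged: "E i j \<noteq> None \<Longrightarrow> step2 n E i j = E i j"
  unfolding step2_def by auto

lemma step3_unchanged: "E i j \<noteq> None \<Longrightarrow> step3 n E i j = E i j"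
  unfolding step3_def by auto

definition nest_consistent :: "nat \<Rightarrow> nat set set \<Rightarrow> emat \<Rightarrow> bool" where
  "nest_consistent n P E \<longleftrightarrow> (\<forall>i\<in>{1..n}. \<forall>j\<in>{1..n}. i \<noteq> j \<longrightarrow> E i j \<noteq> None \<longrightarrow>
     E i j = Some (if nest_of P i = nest_of P j then 1 else 0))"

lemma nest_consistentI:
  assumes "\<And>i j. i \<in> {1..n} \<Longrightarrow> j \<in> {1..n} \<Longrightarrow> i \<noteq> j \<Longrightarrow> E i j \<noteq> None \<Longrightarrow>
    E i j = Some (if nest_of P i = nest_of P j then 1 else 0)"
  shows "nest_consistent n P E"
  using assms unfolding nest_consistent_def by blast

lemma nest_consistentD:
  "nest_consistent n P E \<Longrightarrow> i \<in> {1..n} \<Longrightarrow> j \<in> {1..n} \<Longrightarrow> i \<noteq> j \<Longrightarrow> E i j \<noteq> None \<Longrightarrow>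
    E i j = Some (if nest_of P i = nest_of P j then 1 else 0)"
  unfolding nest_consistent_def by blast

lemma nest_consistent_one_imp_same_nest:
  "nest_consistent n P E \<Longrightarrow> i \<in> {1..n} \<Longrightarrow> j \<in> {1..n} \<Longrightarrow> i \<noteq> j \<Longrightarrow> E i j = Some 1 \<Longrightarrow>
    nest_of P i = nest_of P j"
  using nest_consistentD[of n P E i j] by (cases "nest_of P i = nest_of P j") simp_all

lemma foldl_step1_update_nest_consistent:
  assumes "\<And>S E. S \<in> set Ss \<Longrightarrow> nest_consistent n P E \<Longrightarrow> nest_consistent n P (step1_update n BF S E)"
    and "nest_consistent n P E0"
  shows "nest_consistent n P (foldl (\<lambda>E S. step1_update n BF S E) E0 Ss)"
  using assms by (induction Ss arbitrary: E0) auto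

lemma step2_nest_consistent:
  assumes E: "nest_consistent n P E"
  shows "nest_consistent n P (step2 n E)"
proof (rule nest_consistentI)
  fix i j assume ij: "i \<in> {1..n}" "j \<in> {1..n}" "i \<noteq> j" and "step2 n E i j \<noteq> None"
  show "step2 n E i j = Some (if nest_of P i = nest_of P j then 1 else 0)"
  proof (cases "step2 n E i j = E i j")
    case True
    then show ?thesis using nest_consistentD[OF E ij] \<open>step2 n E i j \<noteq> None\<close> by simp
  next
    case False
    then obtain k where k: "k \<in> {1..n}" "k \<noteq> i" "k \<noteq> j" "E i k = Some 1" "E j k = Some 1"
      and one: "step2 n E i j = Some 1"
      unfolding step2_def by (auto split: if_split_asm)
    have "nest_of P i = nest_of P k" "nest_of P j = nest_of P k"
      using nest_consistent_one_imp_same_nest[OF E ij(1) k(1) k(2)[symmetric] k(4)]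
        nest_consistent_one_imp_same_nest[OF E ij(2) k(1) k(3)[symmetric] k(5)] by auto
    then show ?thesis using one by simp
  qed
qed

lemma nest_consistent_one_iff:
  assumes "partition_on {1..n} P" "nest_consistent n P E"
    and "i \<in> {1..n}" "k \<in> {1..n}" "i \<noteq> k" "E i k \<noteq> None"
  shows "E i k = Some 1 \<longleftrightarrow> k \<in> nest_of P i"
  using nest_consistentD[OF assms(2-6)] nest_of_eq_iff[OF assms(1,3,4)] by simp

lemma step3_step2_same_nest:
  assumes P: "partition_on {1..n} P" and E: "nest_consistent n P E"
    and ij: "i \<in> {1..n}" "j \<in> {1..n}" "i \<noteq> j" "nest_of P i = nest_of P j" "E i j = None"
    and third: "\<And>k. k \<in> nest_of P i - {i, j} \<Longrightarrow> E i k \<noteq> None \<and> E j k \<noteq> None"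
  shows "step3 n (step2 n E) i j = Some 1"
proof (cases "nest_of P i \<subseteq> {i, j}")
  case False
  then obtain k where k: "k \<in> nest_of P i - {i, j}" by blast
  then have "k \<in> {1..n}" using nest_of_subset[OF P ij(1)] by blast
  moreover have "E i k = Some 1" "E j k = Some 1"
    using k third[OF k] ij(4) nest_consistent_one_iff[OF P E ij(1) \<open>k \<in> {1..n}\<close>]
      nest_consistent_one_iff[OF P E ij(2) \<open>k \<in> {1..n}\<close>] by auto
  ultimately have "\<exists>k\<in>{1..n}. k \<noteq> i \<and> k \<noteq> j \<and> E i k = Some 1 \<and> E j k = Some 1"
    using k by blast
  then have "step2 n E i j = Some 1"
    using ij unfolding step2_def by simp
  then show ?thesis by (simp add: step3_unchanged)
next
  case True
  have no_link: "E' i k \<noteq> Some 1 \<and> E' j k \<noteq> Some 1"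
    if E': "nest_consistent n P E'" and k: "k \<in> {1..n}" "k \<noteq> i" "k \<noteq> j" for E' k
  proof -
    have "k \<notin> nest_of P i" "k \<notin> nest_of P j"
      using True k ij(4) by auto
    then show ?thesis
      using nest_consistent_one_iff[OF P E' ij(1) k(1) k(2)[symmetric]]
        nest_consistent_one_iff[OF P E' ij(2) k(1) k(3)[symmetric]] by auto
  qed
  have "step2 n E i j = None"
    using ij(5) no_link[OF E] unfolding step2_def by auto
  moreover have "\<forall>k\<in>{1..n}. k \<noteq> i \<and> k \<noteq> j \<longrightarrow> step2 n E i k \<noteq> Some 1 \<and> step2 n E j k \<noteq> Some 1"
    using no_link[OF step2_nest_consistent[OF E]] by blast
  ultimately show ?thesis
    using ij(1-3) unfolding step3_def by simp
qed

lemma step3_step2_different_nests: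
  assumes P: "partition_on {1..n} P" and E: "nest_consistent n P E"
    and ij: "i \<in> {1..n}" "j \<in> {1..n}" "nest_of P i \<noteq> nest_of P j" "E i j = None"
    and witness: "\<exists>k\<in>nest_of P i - {i}. E i k \<noteq> None"
  shows "step3 n (step2 n E) i j = None"
proof -
  have "\<not> (\<exists>k\<in>{1..n}. k \<noteq> i \<and> k \<noteq> j \<and> E i k = Some 1 \<and> E j k = Some 1)"
  proof
    assume "\<exists>k\<in>{1..n}. k \<noteq> i \<and> k \<noteq> j \<and> E i k = Some 1 \<and> E j k = Some 1"
    then obtain k where k: "k \<in> {1..n}" "k \<noteq> i" "k \<noteq> j" "E i k = Some 1" "E j k = Some 1"
      by blast
    show False
      using nest_consistent_one_imp_same_nest[OF E ij(1) k(1) k(2)[symmetric] k(4)]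
        nest_consistent_one_imp_same_nest[OF E ij(2) k(1) k(3)[symmetric] k(5)] ij(3) by simp
  qed
  then have "step2 n E i j = None"
    using ij(4) unfolding step2_def by simp
  moreover obtain k where k: "k \<in> nest_of P i - {i}" "E i k \<noteq> None"
    using witness by blast
  moreover have "k \<in> {1..n}" "k \<noteq> j"
    using k(1) nest_of_subset[OF P ij(1)] nest_of_eq_iff[OF P ij(1,2)] ij(3) by auto
  moreover have "step2 n E i k = Some 1"
    using k \<open>k \<in> {1..n}\<close> nest_consistent_one_iff[OF P E ij(1)] by (simp add: step2_unchanged)
  ultimately show ?thesis
    unfolding step3_def by auto
qed

lemma step4_step3_step2_eq_nest_indicator:
  assumes P: "partition_on {1..n} P" and E: "nest_consistent n P E"
    and ij: "i \<in> {1..n}" "j \<in> {1..n}" "i \<noteq> j"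
    and third: "\<And>k. nest_of P i = nest_of P j \<Longrightarrow> E i j = None \<Longrightarrow> k \<in> nest_of P i - {i, j} \<Longrightarrow>
      E i k \<noteq> None \<and> E j k \<noteq> None"
    and witness: "nest_of P i \<noteq> nest_of P j \<Longrightarrow> E i j = None \<Longrightarrow> \<exists>k\<in>nest_of P i - {i}. E i k \<noteq> None"
  shows "step4 (step3 n (step2 n E)) i j = (if nest_of P i = nest_of P j then 1 else 0)"
proof (cases "E i j = None")
  case False
  then show ?thesis
    using nest_consistentD[OF E ij] by (simp add: step2_unchanged step3_unchanged step4_def)
next
  case undecided: True
  show ?thesis
  proof (cases "nest_of P i = nest_of P j")
    case same: True
    have "step3 n (step2 n E) i j = Some 1"
      by (rule step3_step2_same_nest[OF P E ij same undecided third[OF same undecided]])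
    then show ?thesis using same by (simp add: step4_def)
  next
    case other: False
    have "step3 n (step2 n E) i j = None"
      by (rule step3_step2_different_nests[OF P E ij(1,2) other undecided witness[OF other undecided]])
    then show ?thesis using other by (simp add: step4_def)
  qed
qed

section \<open>Recovery of the nests\<close>

locale nested_logit_design = nested_logit +
  fixes b :: nat and \<sigma> :: "nat \<Rightarrow> nat \<Rightarrow> nat"
  assumes assumption1: "assumption1 P lam"
    and encoding: "valid_encoding n b \<sigma>"
    and assumption2: "assumption2 (design n b \<sigma>) P v lam"
begin

(* E[i,j] is non-null after step 1. *)
abbreviation decided :: "nat \<Rightarrow> nat \<Rightarrow> bool" where
  "decided i j \<equiv> \<exists>S\<in>design n b \<sigma>. step1_sets n BF S i j"

lemma decided_sym: "decided i j \<longleftrightarrow> decided j i"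
  using step1_sets_sym by blast

lemma boosted_tie_imp_same_nest:
  assumes S: "S \<in> design n b \<sigma>" and ij: "i \<in> S" "j \<in> S"
    and tie: "BF i S = BF j S" and boosted: "BF 0 S < BF i S"
  shows "nest_of P i = nest_of P j"
proof (rule ccontr)
  assume other: "nest_of P i \<noteq> nest_of P j"
  have Sn: "S \<subseteq> {1..n}" using design_subset[OF S] .
  have "mult v lam (nest_of P i) S = mult v lam (nest_of P j) S"
    using tie boost_factor_eq_mult[OF Sn ij(1)] boost_factor_eq_mult[OF Sn ij(2)]
      boost_factor_outside_pos[of S] by simp
  moreover have "\<not> nest_of P i \<subseteq> S" "\<not> nest_of P j \<subseteq> S"
    using outside_less_boost_factor_iff[OF assumption1 Sn ij(1)]
      outside_less_boost_factor_iff[OF assumption1 Sn ij(2)] boosted tie by simp_all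
  moreover have "nest_of P i \<in> P" "i \<in> nest_of P i" "nest_of P j \<in> P" "j \<in> nest_of P j"
    using nest_of_in_partition[OF partition] in_nest_of[OF partition] Sn ij by auto
  ultimately show False
    using assumption2 S other ij unfolding assumption2_def by blast
qed

lemma step1_update_decided:
  assumes S: "S \<in> design n b \<sigma>" and sets: "step1_sets n BF S i j"
  shows "step1_update n BF S E i j = Some (if nest_of P i = nest_of P j then 1 else 0)"
proof -
  have Sn: "S \<subseteq> {1..n}" using design_subset[OF S] .
  have ij: "i \<noteq> j" using sets by (simp add: step1_sets_def)
  consider (differ) "i \<in> S" "j \<in> S" "BF i S \<noteq> BF j S"
    | (tie) "i \<in> S" "j \<in> S" "BF i S = BF j S" "BF 0 S < BF i S"
    | (unboosted) "i \<in> S" "BF i S = BF 0 S" "j \<in> {1..n}" "j \<notin> S"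
    | (unboosted') "j \<in> S" "BF j S = BF 0 S" "i \<in> {1..n}" "i \<notin> S"
    using sets unfolding step1_sets_def by auto
  then show ?thesis
  proof cases
    case differ
    then have "nest_of P i \<noteq> nest_of P j"
      using same_nest_imp_boost_factor_eq[OF Sn] by blast
    then show ?thesis using differ ij by (simp add: step1_update_def)
  next
    case tie
    then have "nest_of P i = nest_of P j"
      using boosted_tie_imp_same_nest[OF S] by blast
    then show ?thesis using tie ij by (simp add: step1_update_def)
  next
    case unboosted
    then have "nest_of P i \<noteq> nest_of P j"
      using unboosted_imp_other_nest[OF assumption1 Sn] by blast
    then show ?thesis using unboosted ij Sn by (auto simp: step1_update_def)
  next
    case unboosted'
    then have "nest_of P i \<noteq> nest_of P j"
      using unboosted_imp_other_nest[OF assumption1 Sn] by metis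
    then show ?thesis using unboosted' ij Sn by (auto simp: step1_update_def)
  qed
qed

lemma step1_update_nest_consistent:
  assumes "S \<in> design n b \<sigma>" "nest_consistent n P E"
  shows "nest_consistent n P (step1_update n BF S E)"
proof (rule nest_consistentI)
  fix i j assume ij: "i \<in> {1..n}" "j \<in> {1..n}" "i \<noteq> j" and "step1_update n BF S E i j \<noteq> None"
  then show "step1_update n BF S E i j = Some (if nest_of P i = nest_of P j then 1 else 0)"
    using step1_update_decided[OF assms(1)] step1_update_unchanged[of n BF S i j E]
      nest_consistentD[OF assms(2) ij] by (cases "step1_sets n BF S i j") simp_all
qed

lemma undecided_code_cases:
  assumes x: "x \<in> {1..n}" and y: "y \<in> {1..n}" "x \<noteq> y" and undecided: "\<not> decided x y"
    and z: "z \<in> nest_of P x" and l: "l \<in> {1..Lnum b n}"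
  shows "\<sigma> z l = \<sigma> x l \<or> \<sigma> z l = \<sigma> y l"
proof (rule ccontr)
  assume codes: "\<not> ?thesis"
  (* S keeps x and y but drops a member of x's nest, so x is boosted in S. *)
  define S where "S = exp_set n \<sigma> l (\<sigma> z l)"
  have zn: "z \<in> {1..n}" using nest_of_subset[OF partition x] z by blast
  have S: "S \<in> design n b \<sigma>"
    unfolding S_def using exp_set_code_in_design[OF encoding zn l] .
  have "x \<in> S" "y \<in> S" "z \<notin> S"
    using x y codes by (auto simp: S_def mem_exp_set_iff)
  moreover from this have "BF 0 S < BF x S"
    using outside_less_boost_factor_iff[OF assumption1 design_subset[OF S]] z by blast
  ultimately have "step1_sets n BF S x y"
    using y(2) by (simp add: step1_sets_def)
  then show False using undecided S by blast
qed

lemma undecided_nest_meets_code: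
  assumes i: "i \<in> {1..n}" and j: "j \<in> {1..n}" and undecided: "\<not> decided i j"
    and l: "l \<in> {1..Lnum b n}" "\<sigma> i l \<noteq> \<sigma> j l"
  shows "\<exists>z\<in>nest_of P i. \<sigma> z l = \<sigma> j l"
proof -
  define S where "S = exp_set n \<sigma> l (\<sigma> j l)"
  have S: "S \<in> design n b \<sigma>"
    unfolding S_def using exp_set_code_in_design[OF encoding j l(1)] .
  have iS: "i \<in> S" "j \<notin> S"
    using i l(2) by (auto simp: S_def mem_exp_set_iff)
  have "step1_sets n BF S i j" if "BF i S = BF 0 S"
    using that iS i j by (auto simp: step1_sets_def)
  then have "BF i S \<noteq> BF 0 S"
    using undecided S by blast
  then have "\<not> nest_of P i \<subseteq> S"
    using boost_factor_eq_outside_iff[OF assumption1 design_subset[OF S] iS(1)] by simp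
  then obtain z where "z \<in> nest_of P i" "z \<notin> S" by blast
  moreover have "z \<in> {1..n}" using nest_of_subset[OF partition i] calculation(1) by blast
  ultimately show ?thesis by (auto simp: S_def mem_exp_set_iff)
qed

lemma undecided_same_nest_third_decided:
  assumes i: "i \<in> {1..n}" and j: "j \<in> {1..n}" "i \<noteq> j" "nest_of P i = nest_of P j"
    and undecided: "\<not> decided i j" and k: "k \<in> nest_of P i - {i, j}"
  shows "decided i k"
proof (rule ccontr)
  assume undecided_ik: "\<not> decided i k"
  have kn: "k \<in> {1..n}" using nest_of_subset[OF partition i] k by blast
  have "j \<in> nest_of P i" using nest_of_eq_iff[OF partition i j(1)] j(3) by simp
  have "k = j"
  proof (rule valid_encoding_inj[OF encoding kn j(1)])
    fix l assume l: "l \<in> {1..Lnum b n}"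
    show "\<sigma> k l = \<sigma> j l"
      using undecided_code_cases[OF i j(1,2) undecided _ l, of k]
        undecided_code_cases[OF i kn _ undecided_ik \<open>j \<in> nest_of P i\<close> l] k by auto
  qed
  then show False using k by simp
qed

lemma undecided_other_nest_witness:
  assumes i: "i \<in> {1..n}" and j: "j \<in> {1..n}" "nest_of P i \<noteq> nest_of P j"
    and undecided: "\<not> decided i j"
  shows "\<exists>k\<in>nest_of P i - {i}. decided i k"
proof (rule ccontr)
  assume none: "\<not> ?thesis"
  have "i \<noteq> j" using j(2) by blast
  then obtain l0 where "l0 \<in> {1..Lnum b n}" "\<sigma> i l0 \<noteq> \<sigma> j l0"
    using valid_encoding_inj[OF encoding i j(1)] by blast
  then obtain z where z: "z \<in> nest_of P i" "\<sigma> z l0 = \<sigma> j l0"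
    using undecided_nest_meets_code[OF i j(1) undecided] by blast
  then have "z \<noteq> i" using \<open>\<sigma> i l0 \<noteq> \<sigma> j l0\<close> by auto
  have zn: "z \<in> {1..n}" using nest_of_subset[OF partition i] z(1) by blast
  have undecided_iz: "\<not> decided i z" using none z(1) \<open>z \<noteq> i\<close> by blast
  (* At a coordinate where z sides with i against j, some z' \<in> N(i) carries j's digit, which is
     neither i's nor z's although the pair (i,z) is undecided. *)
  have "z = j"
  proof (rule valid_encoding_inj[OF encoding zn j(1)])
    fix l assume l: "l \<in> {1..Lnum b n}"
    show "\<sigma> z l = \<sigma> j l"
    proof (rule ccontr)
      assume "\<sigma> z l \<noteq> \<sigma> j l"
      then have zi: "\<sigma> z l = \<sigma> i l" "\<sigma> i l \<noteq> \<sigma> j l"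
        using undecided_code_cases[OF i j(1) \<open>i \<noteq> j\<close> undecided z(1) l] by auto
      then obtain z' where "z' \<in> nest_of P i" "\<sigma> z' l = \<sigma> j l"
        using undecided_nest_meets_code[OF i j(1) undecided l] by blast
      then show False
        using undecided_code_cases[OF i zn \<open>z \<noteq> i\<close>[symmetric] undecided_iz _ l, of z'] zi by auto
    qed
  qed
  then show False
    using z(1) j(2) nest_of_eq_iff[OF partition i j(1)] by simp
qed

lemma algorithm1_eq_nest_indicator:
  assumes Ss: "set Ss = design n b \<sigma>" and ij: "i \<in> {1..n}" "j \<in> {1..n}" "i \<noteq> j"
  shows "algorithm1 n BF Ss i j = (if nest_of P i = nest_of P j then 1 else 0)"
proof -
  define E where "E = foldl (\<lambda>E S. step1_update n BF S E) (\<lambda>_ _. None) Ss"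
  have undecided_iff: "E x y = None \<longleftrightarrow> \<not> decided x y" for x y
    unfolding E_def foldl_step1_update_eq_None_iff Ss by simp
  have "nest_consistent n P E"
    unfolding E_def using Ss step1_update_nest_consistent
    by (intro foldl_step1_update_nest_consistent) (auto simp: nest_consistent_def)
  then have "step4 (step3 n (step2 n E)) i j = (if nest_of P i = nest_of P j then 1 else 0)"
  proof (rule step4_step3_step2_eq_nest_indicator[OF partition _ ij])
    fix k assume same: "nest_of P i = nest_of P j" and "E i j = None" and k: "k \<in> nest_of P i - {i, j}"
    then have "\<not> decided i j" "\<not> decided j i"
      using undecided_iff decided_sym by blast+
    then show "E i k \<noteq> None \<and> E j k \<noteq> None"
      using undecided_same_nest_third_decided[OF ij same] k same
        undecided_same_nest_third_decided[OF ij(2,1) ij(3)[symmetric] same[symmetric]]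
        undecided_iff by auto
  next
    assume "nest_of P i \<noteq> nest_of P j" "E i j = None"
    then show "\<exists>k\<in>nest_of P i - {i}. E i k \<noteq> None"
      using undecided_other_nest_witness[OF ij(1,2)] undecided_iff by blast
  qed
  then show ?thesis
    unfolding algorithm1_def E_def .
qed

end

theorem theorem4p5:
  fixes n b :: nat and \<sigma> :: "nat \<Rightarrow> nat \<Rightarrow> nat" and P :: "nat set set"
    and v :: "nat \<Rightarrow> real" and lam vN :: "nat set \<Rightarrow> real" and ord :: "nat set list"
    and i j :: nat
  assumes "2 \<le> n" and "2 \<le> b" and "valid_encoding n b \<sigma>"
    and "NL_model n P v lam vN"
    and "assumption1 P lam"
    and "assumption2 (design n b \<sigma>) P v lam"
    and "set ord = design n b \<sigma>" and "distinct ord"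
    and "i \<in> {1..n}" and "j \<in> {1..n}" and "i \<noteq> j"
  shows "algorithm1 n (boost_factor P v lam vN n) ord i j
           = (if nest_of P i = nest_of P j then 1 else 0)"
proof -
  interpret nested_logit_design n P v lam vN b \<sigma>
    using assms(3-6) by unfold_locales
  show ?thesis
    using algorithm1_eq_nest_indicator[OF assms(7,9-11)] .
qed

end
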